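(* Let $q$ be a self-join-free Boolean conjunctive query, let $q_0\subseteq q$, let $\mathbf{db}$ be a database, and let $\mathbf{o}$ be a garbage set for $q_0$ in $\mathbf{db}$. If $\mathbf{p}$ is the union of one or more blocks of $\mathbf{o}$, then $\mathbf{o}\setminus\mathbf{p}$ is a garbage set for $q_0$ in $\mathbf{db}\setminus\mathbf{p}$.
   Context: Every relation name has a signature $[n,k]$ ($1\le k\le n$; primary-key positions $1,\dots,k$) and a mode in $\{\mathsf{c},\mathsf{i}\}$. Facts are variable-free atoms; facts are key-equal if same relation name and same primary-key values. A database is a finite set of facts with no two distinct key-equal facts of mode $\mathsf{c}$, all of whose relation names occur in $q$. A block of a set of facts is a maximal subset of pairwise key-equal facts; the block of $A$ in $\mathbf{db}$ is the set of facts of $\mathbf{db}$ key-equal to $A$. A repair of a set of facts is a maximal subset without two distinct key-equal facts. A self-join-free Boolean conjunctive query is a finite set of atoms with distinct relation names; for a fact $A$, $\mathrm{atom}(A)$ is the atom of $q$ with the same relation name. A subset $\mathbf{o}\subseteq\mathbf{db}$ is a garbage set for $q_0$ in $\mathbf{db}$ if (1) for every $A\in\mathbf{o}$, $\mathrm{atom}(A)\in q_0$ and the block of $A$ in $\mathbf{db}$ is included in $\mathbf{o}$; and (2) there is a repair $\mathbf{r}$ of $\mathbf{o}$ such that for every valuation $\theta$ of the variables of $q$, if $\theta(q)\subseteq(\mathbf{db}\setminus\mathbf{o})\cup\mathbf{r}$ then $\theta(q_0)\cap\mathbf{r}=\emptyset$. *)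

theory Defs
  imports Main
begin

text \<open>Modes of relation names: c (consistent) and i (possibly inconsistent).\<close>
datatype mode = ModeC | ModeI

datatype ('v, 'c) trm = Var 'v | Cst 'c

text \<open>An atom is a relation name with a list of terms; a fact is a relation name
  with a list of constants. The signature sig R = (n, k) gives arity n and
  primary-key length k (key positions 1..k).\<close>
type_synonym ('r, 'v, 'c) atom = "'r \<times> ('v, 'c) trm list"
type_synonym ('r, 'c) fact = "'r \<times> 'c list"

definition wf_sig :: "('r \<Rightarrow> nat \<times> nat) \<Rightarrow> bool" where
  "wf_sig sig \<longleftrightarrow> (\<forall>R. 1 \<le> snd (sig R) \<and> snd (sig R) \<le> fst (sig R))"

definition key_equal :: "('r \<Rightarrow> nat \<times> nat) \<Rightarrow> ('r, 'c) fact \<Rightarrow> ('r, 'c) fact \<Rightarrow> bool" where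
  "key_equal sig A B \<longleftrightarrow> fst A = fst B \<and>
     take (snd (sig (fst A))) (snd A) = take (snd (sig (fst B))) (snd B)"

definition sjf_query :: "('r \<Rightarrow> nat \<times> nat) \<Rightarrow> ('r, 'v, 'c) atom set \<Rightarrow> bool" where
  "sjf_query sig q \<longleftrightarrow> finite q \<and> (\<forall>a\<in>q. \<forall>b\<in>q. fst a = fst b \<longrightarrow> a = b) \<and>
     (\<forall>a\<in>q. length (snd a) = fst (sig (fst a)))"

definition is_database ::
  "('r \<Rightarrow> nat \<times> nat) \<Rightarrow> ('r \<Rightarrow> mode) \<Rightarrow> ('r, 'v, 'c) atom set \<Rightarrow> ('r, 'c) fact set \<Rightarrow> bool" where
  "is_database sig md q db \<longleftrightarrow> finite db \<and>
     (\<forall>A\<in>db. length (snd A) = fst (sig (fst A)) \<and> fst A \<in> fst ` q) \<and>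
     (\<forall>A\<in>db. \<forall>B\<in>db. key_equal sig A B \<and> A \<noteq> B \<longrightarrow> md (fst A) \<noteq> ModeC)"

definition block_in :: "('r \<Rightarrow> nat \<times> nat) \<Rightarrow> ('r, 'c) fact \<Rightarrow> ('r, 'c) fact set \<Rightarrow> ('r, 'c) fact set" where
  "block_in sig A db = {B \<in> db. key_equal sig A B}"

definition is_block :: "('r \<Rightarrow> nat \<times> nat) \<Rightarrow> ('r, 'c) fact set \<Rightarrow> ('r, 'c) fact set \<Rightarrow> bool" where
  "is_block sig S B \<longleftrightarrow> B \<subseteq> S \<and> (\<forall>A\<in>B. \<forall>C\<in>B. key_equal sig A C) \<and>
     (\<forall>B'. B \<subseteq> B' \<and> B' \<subseteq> S \<and> (\<forall>A\<in>B'. \<forall>C\<in>B'. key_equal sig A C) \<longrightarrow> B' = B)"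

definition consistent :: "('r \<Rightarrow> nat \<times> nat) \<Rightarrow> ('r, 'c) fact set \<Rightarrow> bool" where
  "consistent sig S \<longleftrightarrow> (\<forall>A\<in>S. \<forall>B\<in>S. key_equal sig A B \<longrightarrow> A = B)"

definition is_repair :: "('r \<Rightarrow> nat \<times> nat) \<Rightarrow> ('r, 'c) fact set \<Rightarrow> ('r, 'c) fact set \<Rightarrow> bool" where
  "is_repair sig r S \<longleftrightarrow> r \<subseteq> S \<and> consistent sig r \<and>
     (\<forall>r'. r \<subseteq> r' \<and> r' \<subseteq> S \<and> consistent sig r' \<longrightarrow> r' = r)"

fun eval_trm :: "('v \<Rightarrow> 'c) \<Rightarrow> ('v, 'c) trm \<Rightarrow> 'c" where
  "eval_trm \<theta> (Var v) = \<theta> v"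
| "eval_trm \<theta> (Cst c) = c"

definition val_atom :: "('v \<Rightarrow> 'c) \<Rightarrow> ('r, 'v, 'c) atom \<Rightarrow> ('r, 'c) fact" where
  "val_atom \<theta> a = (fst a, map (eval_trm \<theta>) (snd a))"

definition atom_of :: "('r, 'v, 'c) atom set \<Rightarrow> ('r, 'c) fact \<Rightarrow> ('r, 'v, 'c) atom" where
  "atom_of q A = (THE a. a \<in> q \<and> fst a = fst A)"

definition garbage_set ::
  "('r \<Rightarrow> nat \<times> nat) \<Rightarrow> ('r, 'v, 'c) atom set \<Rightarrow> ('r, 'v, 'c) atom set \<Rightarrow>
   ('r, 'c) fact set \<Rightarrow> ('r, 'c) fact set \<Rightarrow> bool" where
  "garbage_set sig q q0 db obs \<longleftrightarrow> obs \<subseteq> db \<and>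
     (\<forall>A\<in>obs. atom_of q A \<in> q0 \<and> block_in sig A db \<subseteq> obs) \<and>
     (\<exists>r. is_repair sig r obs \<and>
        (\<forall>\<theta>. val_atom \<theta> ` q \<subseteq> (db - obs) \<union> r \<longrightarrow> val_atom \<theta> ` q0 \<inter> r = {}))"

end

theory Submission
  imports Defs
begin

text \<open>Blocks are closed under key-equality, so deleting them from a repair of the garbage set
  leaves a repair of what remains: every surviving fact still has its key-equal representative
  in the repair. The query condition only becomes weaker when facts disappear from both the
  database and the repair.\<close>

lemma key_equal_refl: "key_equal sig A A"
  by (simp add: key_equal_def)

lemma key_equal_sym: "key_equal sig A B \<Longrightarrow> key_equal sig B A"
  by (auto simp add: key_equal_def)

lemma key_equal_trans: "key_equal sig A B \<Longrightarrow> key_equal sig B C \<Longrightarrow> key_equal sig A C"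
  by (auto simp add: key_equal_def)

definition key_saturated :: "('r \<Rightarrow> nat \<times> nat) \<Rightarrow> ('r, 'c) fact set \<Rightarrow> ('r, 'c) fact set \<Rightarrow> bool" where
  "key_saturated sig S p \<longleftrightarrow> (\<forall>x\<in>S. \<forall>y\<in>p. key_equal sig x y \<longrightarrow> x \<in> p)"

lemma is_block_key_saturated:
  assumes "is_block sig S B"
  shows "key_saturated sig S B"
  unfolding key_saturated_def
proof (intro ballI impI)
  fix x y assume "x \<in> S" "y \<in> B" "key_equal sig x y"
  with assms have "\<forall>A\<in>insert x B. \<forall>C\<in>insert x B. key_equal sig A C"
    unfolding is_block_def by (metis insert_iff key_equal_refl key_equal_sym key_equal_trans)
  moreover have "insert x B \<subseteq> S"
    using assms \<open>x \<in> S\<close> unfolding is_block_def by auto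
  ultimately have "insert x B = B"
    using assms unfolding is_block_def by (metis subset_insertI)
  then show "x \<in> B" by auto
qed

lemma key_saturated_Union:
  "(\<And>B. B \<in> P \<Longrightarrow> key_saturated sig S B) \<Longrightarrow> key_saturated sig S (\<Union>P)"
  unfolding key_saturated_def by blast

lemma is_repair_key_equal_member:
  assumes "is_repair sig r S" and "x \<in> S"
  obtains y where "y \<in> r" and "key_equal sig x y"
proof (cases "consistent sig (insert x r)")
  case True
  with assms have "insert x r = r"
    unfolding is_repair_def by blast
  then have "x \<in> r" by blast
  with that show ?thesis using key_equal_refl by blast
next
  case False
  with assms have "\<exists>y\<in>r. key_equal sig x y"
    unfolding is_repair_def consistent_def by (metis insert_iff key_equal_sym)
  with that show ?thesis by blast
qed

lemma is_repair_Diff: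
  assumes repair: "is_repair sig r S" and saturated: "key_saturated sig S p"
  shows "is_repair sig (r - p) (S - p)"
  unfolding is_repair_def
proof (intro conjI allI impI)
  show "r - p \<subseteq> S - p" and "consistent sig (r - p)"
    using repair unfolding is_repair_def consistent_def by auto
  fix r' assume r': "r - p \<subseteq> r' \<and> r' \<subseteq> S - p \<and> consistent sig r'"
  show "r' = r - p"
  proof (rule ccontr)
    assume "r' \<noteq> r - p"
    with r' obtain x where x: "x \<in> r'" "x \<notin> r - p" by blast
    with r' have "x \<in> S" "x \<notin> p" by auto
    then obtain y where y: "y \<in> r" "key_equal sig x y"
      using repair is_repair_key_equal_member by metis
    with saturated \<open>x \<in> S\<close> \<open>x \<notin> p\<close> have "y \<notin> p"
      unfolding key_saturated_def by blast
    with y r' have "y \<in> r'" by auto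
    with r' x y show False unfolding consistent_def by blast
  qed
qed

lemma garbage_set_Diff:
  assumes garbage: "garbage_set sig q q0 db obs" and saturated: "key_saturated sig obs p"
  shows "garbage_set sig q q0 (db - p) (obs - p)"
proof -
  from garbage obtain r where
        "obs \<subseteq> db"
    and blocks: "\<forall>A\<in>obs. atom_of q A \<in> q0 \<and> block_in sig A db \<subseteq> obs"
    and repair: "is_repair sig r obs"
    and query: "\<forall>\<theta>. val_atom \<theta> ` q \<subseteq> (db - obs) \<union> r \<longrightarrow> val_atom \<theta> ` q0 \<inter> r = {}"
    unfolding garbage_set_def by blast
  have "val_atom \<theta> ` q0 \<inter> (r - p) = {}"
    if "val_atom \<theta> ` q \<subseteq> (db - p - (obs - p)) \<union> (r - p)" for \<theta>
    using that query by blast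
  moreover have "block_in sig A (db - p) \<subseteq> obs - p" if "A \<in> obs - p" for A
    using blocks that unfolding block_in_def by auto
  ultimately show ?thesis
    unfolding garbage_set_def
    using \<open>obs \<subseteq> db\<close> blocks is_repair_Diff[OF repair saturated] by blast
qed

theorem lemma30:
  fixes sig :: "'r \<Rightarrow> nat \<times> nat" and md :: "'r \<Rightarrow> mode"
    and q q0 :: "('r, 'v, 'c) atom set"
    and db obs p :: "('r, 'c) fact set"
    and P :: "('r, 'c) fact set set"
  assumes "wf_sig sig"
    and "sjf_query sig q"
    and "q0 \<subseteq> q"
    and "is_database sig md q db"
    and "garbage_set sig q q0 db obs"
    and "P \<noteq> {}"
    and "\<forall>B\<in>P. is_block sig obs B"
    and "p = \<Union>P"
  shows "garbage_set sig q q0 (db - p) (obs - p)"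
proof -
  have "key_saturated sig obs p"
    using assms(7,8) by (simp add: key_saturated_Union is_block_key_saturated)
  with assms(5) show ?thesis by (rule garbage_set_Diff)
qed

end
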